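(* Let $d_2$ be the river metric on $\mathbb R^2$. For $P=(P^{(1)},P^{(2)})\in\mathbb R^2$ let $P^*=(P^{(1)},0)$. Then for all $P_1,P_2\in\mathbb R^2$: (i) if $P_2\in\{(1-a)P_1^*+aP_1:\ a\in[0,1)\}$, then $\mathcal C_{d_2}(P_1,P_2)=\mathbb R^2\setminus\{P_2+t(P_1-P_1^* ):\ t>0\}$; (ii) if $P_1\neq P_2$, $P_2\notin\{(1-a)P_1^*+aP_1:\ a\in[0,1)\}$ and $P_2^{(2)}\neq0$, then $\mathcal C_{d_2}(P_1,P_2)=\{(P_2^{(1)},sP_2^{(2)}):\ s\ge1\}$; (iii) if $P_1^{(1)}\ne P_2^{(1)}$ and $P_2^{(2)}=0$, then $\mathcal C_{d_2}(P_1,P_2)=\{x\in\mathbb R:\ (x-P_2^{(1)})(P_2^{(1)}-P_1^{(1)})\ge0\}\times\mathbb R$; (iv) if $P_1=P_2$, then $\mathcal C_{d_2}(P_1,P_2)=\mathbb R^2$.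
   Context: Points of $\mathbb R^2$ are written $A=(A^{(1)},A^{(2)})$. The river metric is $d_2(A,B)=|A^{(2)}-B^{(2)}|$ if $A^{(1)}=B^{(1)}$, and $d_2(A,B)=|A^{(2)}|+|A^{(1)}-B^{(1)}|+|B^{(2)}|$ if $A^{(1)}\neq B^{(1)}$. For a metric $d$ on a set $M$ and $A,B\in M$, $\mathcal C_d(A,B)=\{X\in M:\ d(X,A)=d(X,B)+d(A,B)<+\infty\}$. *)

theory Defs
  imports "HOL-Analysis.Analysis"
begin

definition river_dist :: "real \<times> real \<Rightarrow> real \<times> real \<Rightarrow> real" where
  "river_dist A B =
     (if fst A = fst B then \<bar>snd A - snd B\<bar>
      else \<bar>snd A\<bar> + \<bar>fst A - fst B\<bar> + \<bar>snd B\<bar>)"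

text \<open>C_d(A,B) = {X. d(X,A) = d(X,B) + d(A,B) < +\<infinity>}; for a real-valued
  metric the finiteness condition is automatic.\<close>
definition metric_cone :: "('a \<Rightarrow> 'a \<Rightarrow> real) \<Rightarrow> 'a \<Rightarrow> 'a \<Rightarrow> 'a set" where
  "metric_cone d A B = {X. d X A = d X B + d A B}"

definition proj_star :: "real \<times> real \<Rightarrow> real \<times> real" where
  "proj_star P = (fst P, 0)"

end

theory Submission
  imports Defs
begin

text \<open>A point X lies in the cone C(P1,P2) iff P2 lies on a geodesic of the river metric from X to
  P1. Such geodesics run vertically within one line x = const and otherwise descend to the river
  y = 0, move along it and climb up again. Hence membership in the cone reduces to betweenness on
  the real line: of the second coordinates if P1, P2 lie on one vertical line, and of the first
  coordinates (with P2 forced onto the river) otherwise.\<close>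

lemma between_real_iff: "between (u, w) (v::real) \<longleftrightarrow> \<bar>u - w\<bar> = \<bar>u - v\<bar> + \<bar>v - w\<bar>"
  by (simp add: between dist_real_def)

lemma between_zero_iff_scaled:
  "between (0, w) (v::real) \<longleftrightarrow> (\<exists>a. 0 \<le> a \<and> a \<le> 1 \<and> v = a * w)"
  by (auto simp: between_mem_segment closed_segment_def)

lemma between_zero_iff_multiple:
  assumes "v \<noteq> 0"
  shows "between (0, u) (v::real) \<longleftrightarrow> (\<exists>s\<ge>1. u = s * v)"
proof
  assume "between (0, u) v"
  then obtain a where "0 \<le> a" "a \<le> 1" "v = a * u" by (auto simp: between_zero_iff_scaled)
  with assms show "\<exists>s\<ge>1. u = s * v"
    by (intro exI[of _ "1 / a"]) (auto simp: field_simps)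
next
  assume "\<exists>s\<ge>1. u = s * v"
  then obtain s where "s \<ge> 1" "u = s * v" by blast
  then show "between (0, u) v"
    unfolding between_zero_iff_scaled by (intro exI[of _ "1 / s"]) auto
qed

lemma ex_pos_multiple_iff:
  assumes "(w::real) \<noteq> 0"
  shows "(\<exists>t>0. u = t * w) \<longleftrightarrow> 0 < u * w"
proof
  assume "\<exists>t>0. u = t * w"
  then obtain t where "0 < t" "u = t * w" by blast
  moreover have "0 < w * w" using assms by (auto simp: zero_less_mult_iff)
  ultimately show "0 < u * w" by (metis mult.assoc mult_pos_pos)
next
  assume "0 < u * w"
  with assms show "\<exists>t>0. u = t * w"
    by (intro exI[of _ "u / w"]) (auto simp: field_simps zero_less_mult_iff zero_less_divide_iff)
qed

lemma between_iff_not_beyond: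
  assumes "between (0, w) v" "v \<noteq> w"
  shows "between (u, w) (v::real) \<longleftrightarrow> \<not> 0 < (u - v) * w"
  using assms unfolding between_real_iff zero_less_mult_iff by linarith

lemma between_iff_between_zero:
  assumes "\<not> between (0, w) v"
  shows "between (u, w) (v::real) \<longleftrightarrow> between (0, u) v"
  using assms unfolding between_real_iff by linarith

lemma between_real_iff_mult: "between (u, w) (v::real) \<longleftrightarrow> 0 \<le> (u - v) * (v - w)"
  unfolding between_real_iff zero_le_mult_iff by linarith

lemma metric_cone_refl: "d A A = 0 \<Longrightarrow> metric_cone d A A = UNIV"
  by (simp add: metric_cone_def)

lemma river_cone_same_line:
  assumes "fst A = fst B"
  shows "X \<in> metric_cone river_dist A B \<longleftrightarrow>
    (if fst X = fst A then between (snd X, snd A) (snd B) else between (0, snd A) (snd B))"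
  using assms by (auto simp: metric_cone_def river_dist_def between_real_iff abs_minus_commute)

lemma river_cone_different_lines:
  assumes "fst A \<noteq> fst B"
  shows "X \<in> metric_cone river_dist A B \<longleftrightarrow>
    fst X = fst B \<and> between (0, snd X) (snd B) \<or> snd B = 0 \<and> between (fst X, fst A) (fst B)"
  using assms unfolding metric_cone_def river_dist_def between_real_iff
  by (auto simp: abs_minus_commute; smt (verit))

lemma river_segment_iff:
  assumes "P2 \<noteq> P1"
  shows "P2 \<in> {(1 - a) *\<^sub>R proj_star P1 + a *\<^sub>R P1 | a. 0 \<le> a \<and> a < 1} \<longleftrightarrow>
    fst P2 = fst P1 \<and> between (0, snd P1) (snd P2)"
proof -
  have point: "(1 - a) *\<^sub>R proj_star P1 + a *\<^sub>R P1 = (fst P1, a * snd P1)" for a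
    by (cases P1) (simp add: proj_star_def algebra_simps)
  have "a < 1" if "0 \<le> a" "a \<le> 1" "P2 = (fst P1, a * snd P1)" for a
    using that assms by (cases "a = 1") auto
  then show ?thesis
    unfolding point between_zero_iff_scaled by (cases P2) force
qed

lemma river_cone_segment_case:
  assumes "fst P2 = fst P1" "between (0, snd P1) (snd P2)" "P2 \<noteq> P1"
  shows "metric_cone river_dist P1 P2 = UNIV - {P2 + t *\<^sub>R (P1 - proj_star P1) | t. t > 0}"
proof -
  have "snd P2 \<noteq> snd P1"
    using assms(1,3) by (auto simp: prod_eq_iff)
  then have "snd P1 \<noteq> 0"
    using assms(2) by auto
  have "X \<in> metric_cone river_dist P1 P2 \<longleftrightarrow> \<not> (fst X = fst P2 \<and> 0 < (snd X - snd P2) * snd P1)"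
    for X
    using assms \<open>snd P2 \<noteq> snd P1\<close> by (simp add: river_cone_same_line between_iff_not_beyond)
  also have "\<dots> X \<longleftrightarrow> X \<notin> {P2 + t *\<^sub>R (P1 - proj_star P1) | t. t > 0}" for X
    using ex_pos_multiple_iff[OF \<open>snd P1 \<noteq> 0\<close>, of "snd X - snd P2"]
    by (auto simp: proj_star_def prod_eq_iff algebra_simps)
  finally show ?thesis
    by blast
qed

lemma river_cone_ray_case:
  assumes "\<not> (fst P2 = fst P1 \<and> between (0, snd P1) (snd P2))" "snd P2 \<noteq> 0"
  shows "metric_cone river_dist P1 P2 = {(fst P2, s * snd P2) | s. s \<ge> 1}"
proof -
  have "X \<in> metric_cone river_dist P1 P2 \<longleftrightarrow> fst X = fst P2 \<and> between (0, snd X) (snd P2)"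
    for X
    using assms
    by (cases "fst P1 = fst P2")
      (auto simp: river_cone_same_line river_cone_different_lines between_iff_between_zero)
  then show ?thesis
    using assms(2) by (auto simp: between_zero_iff_multiple prod_eq_iff)
qed

lemma river_cone_river_case:
  assumes "fst P1 \<noteq> fst P2" "snd P2 = 0"
  shows "metric_cone river_dist P1 P2 = {x. (x - fst P2) * (fst P2 - fst P1) \<ge> 0} \<times> UNIV"
  using assms by (auto simp: river_cone_different_lines between_real_iff_mult)

theorem proposition2p5:
  fixes P1 P2 :: "real \<times> real"
  shows
  "(P1 \<noteq> P2 \<and> P2 \<in> {(1 - a) *\<^sub>R proj_star P1 + a *\<^sub>R P1 | a. 0 \<le> a \<and> a < 1} \<longrightarrow>
      metric_cone river_dist P1 P2 = UNIV - {P2 + t *\<^sub>R (P1 - proj_star P1) | t. t > 0})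
 \<and> (P1 \<noteq> P2 \<and> P2 \<notin> {(1 - a) *\<^sub>R proj_star P1 + a *\<^sub>R P1 | a. 0 \<le> a \<and> a < 1}
      \<and> snd P2 \<noteq> 0 \<longrightarrow>
      metric_cone river_dist P1 P2 = {(fst P2, s * snd P2) | s. s \<ge> 1})
 \<and> (fst P1 \<noteq> fst P2 \<and> snd P2 = 0 \<longrightarrow>
      metric_cone river_dist P1 P2 = {x. (x - fst P2) * (fst P2 - fst P1) \<ge> 0} \<times> UNIV)
 \<and> (P1 = P2 \<longrightarrow> metric_cone river_dist P1 P2 = UNIV)"
proof (intro conjI impI)
  show "metric_cone river_dist P1 P2 = UNIV - {P2 + t *\<^sub>R (P1 - proj_star P1) | t. t > 0}"
    if "P1 \<noteq> P2 \<and> P2 \<in> {(1 - a) *\<^sub>R proj_star P1 + a *\<^sub>R P1 | a. 0 \<le> a \<and> a < 1}"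
    using that river_segment_iff[of P2 P1] river_cone_segment_case[of P2 P1] by metis
  show "metric_cone river_dist P1 P2 = {(fst P2, s * snd P2) | s. s \<ge> 1}"
    if "P1 \<noteq> P2 \<and> P2 \<notin> {(1 - a) *\<^sub>R proj_star P1 + a *\<^sub>R P1 | a. 0 \<le> a \<and> a < 1}
      \<and> snd P2 \<noteq> 0"
    using that river_segment_iff[of P2 P1] river_cone_ray_case[of P2 P1] by metis
  show "metric_cone river_dist P1 P2 = {x. (x - fst P2) * (fst P2 - fst P1) \<ge> 0} \<times> UNIV"
    if "fst P1 \<noteq> fst P2 \<and> snd P2 = 0"
    using that river_cone_river_case by blast
  show "metric_cone river_dist P1 P2 = UNIV" if "P1 = P2"
    using that metric_cone_refl[of river_dist] by (simp add: river_dist_def)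
qed

end
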